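(* Let $n\ge 3$ be an integer and let $C_n$ be the cycle with $n$ vertices. Then \[ \Theta(C_n)=\begin{cases} 1 & \text{if } n=3,\\ 2 & \text{if } n=4,\\ 4 & \text{if } n\ge 5.\end{cases}\]
   Context: All graphs are finite and simple. Let $k$ be a positive integer. A graph $G=(V,E)$ is a $k$-threshold graph with thresholds $\theta_1<\theta_2<\dots<\theta_k$ (real numbers) if there is a map $r:V\to\mathbb{R}$ such that for all distinct $u,v\in V$: $uv\in E$ if and only if the inequality $\theta_i\le r(u)+r(v)$ holds for an odd number of indices $i\in\{1,\dots,k\}$. Such a map $r$ is called a $(\theta_1,\dots,\theta_k)$-representation of $G$. The threshold number $\Theta(G)$ is the smallest positive integer $k$ such that $G$ is a $k$-threshold graph (for some choice of thresholds $\theta_1<\dots<\theta_k$). *)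

theory Defs
  imports Complex_Main
begin

definition simple_graph :: "'a set \<Rightarrow> ('a \<Rightarrow> 'a \<Rightarrow> bool) \<Rightarrow> bool" where
  "simple_graph V E \<longleftrightarrow> finite V \<and> (\<forall>u\<in>V. \<forall>v\<in>V. E u v \<longleftrightarrow> E v u) \<and> (\<forall>v\<in>V. \<not> E v v)"

text \<open>r is a (theta_1,...,theta_k)-representation, thresholds indexed 0..k-1.\<close>
definition threshold_rep ::
  "'a set \<Rightarrow> ('a \<Rightarrow> 'a \<Rightarrow> bool) \<Rightarrow> nat \<Rightarrow> (nat \<Rightarrow> real) \<Rightarrow> ('a \<Rightarrow> real) \<Rightarrow> bool" where
  "threshold_rep V E k \<theta> r \<longleftrightarrow>
     (\<forall>u\<in>V. \<forall>v\<in>V. u \<noteq> v \<longrightarrow>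
        (E u v \<longleftrightarrow> odd (card {i. i < k \<and> \<theta> i \<le> r u + r v})))"

definition k_threshold_graph :: "nat \<Rightarrow> 'a set \<Rightarrow> ('a \<Rightarrow> 'a \<Rightarrow> bool) \<Rightarrow> bool" where
  "k_threshold_graph k V E \<longleftrightarrow>
     (\<exists>\<theta> r. (\<forall>i j. i < j \<and> j < k \<longrightarrow> \<theta> i < \<theta> j) \<and> threshold_rep V E k \<theta> r)"

definition threshold_number :: "'a set \<Rightarrow> ('a \<Rightarrow> 'a \<Rightarrow> bool) \<Rightarrow> nat" where
  "threshold_number V E = (LEAST k. 0 < k \<and> k_threshold_graph k V E)"

definition cycle_edge :: "nat \<Rightarrow> nat \<Rightarrow> nat \<Rightarrow> bool" where
  "cycle_edge n u v \<longleftrightarrow> u \<noteq> v \<and> ((u + 1) mod n = v \<or> (v + 1) mod n = u)"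

end

theory Submission
  imports Defs "HOL-Number_Theory.Cong"
begin

(*
  With thresholds a < b < c a pair is adjacent iff its weight sum lies in [a, b) or [c, \<infinity>).
  Rotate the cycle so that vertex 0 carries the largest weight. Its non-neighbours 2 and n - 2
  must then have sums with vertex 0 in [b, c), and comparing the remaining sums along the paths
  0-1-2-3 and 0-(n-1)-(n-2)-(n-3) gives a contradiction once n \<ge> 5, so three thresholds do
  not suffice.

  Four do: weight v for even v and 3n - v for odd v puts the sums of consecutive vertices, and
  no others, into [3n - 1, 3n + 2); for even n the closing edge {0, n - 1} is the only pair with
  sum 2n + 1, and for odd n changing the weight of n - 1 to n - 2 isolates it in the band
  [n - 2, n - 1). A threshold above all sums is never passed, so k-threshold graphs are also
  (k+1)-threshold graphs. C_3 and C_4 = K_{2,2} are handled directly.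
*)

lemma odd_card_thresholds_iff:
  fixes \<theta> :: "nat \<Rightarrow> 'b::linorder"
  assumes mono: "\<And>i j. i < j \<Longrightarrow> j < k \<Longrightarrow> \<theta> i < \<theta> j"
  shows "odd (card {i. i < k \<and> \<theta> i \<le> s}) \<longleftrightarrow>
           (\<exists>i\<in>{..<k}. even i \<and> \<theta> i \<le> s \<and> (Suc i < k \<longrightarrow> s < \<theta> (Suc i)))"
proof -
  let ?A = "{i. i < k \<and> \<theta> i \<le> s}"
  have segment: "?A = {..<Suc i}"
    if "i < k" "\<theta> i \<le> s" "Suc i < k \<longrightarrow> s < \<theta> (Suc i)" for i
  proof (intro set_eqI iffI)
    fix j assume "j \<in> ?A"
    show "j \<in> {..<Suc i}"
    proof (rule ccontr)
      assume "j \<notin> {..<Suc i}"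
      then have "Suc i \<le> j" by simp
      then have "\<theta> (Suc i) \<le> \<theta> j"
        using mono[of "Suc i" j] \<open>j \<in> ?A\<close> by (cases "Suc i = j") auto
      then show False using that \<open>j \<in> ?A\<close> \<open>Suc i \<le> j\<close> by auto
    qed
  next
    fix j assume "j \<in> {..<Suc i}"
    then have "\<theta> j \<le> \<theta> i"
      using mono[of j i] \<open>i < k\<close> by (cases "j = i") auto
    then show "j \<in> ?A" using that \<open>j \<in> {..<Suc i}\<close> by auto
  qed
  show ?thesis
  proof
    assume odd: "odd (card ?A)"
    then have "?A \<noteq> {}" by (metis card.empty even_zero)
    define m where "m = Max ?A"
    have fin: "finite ?A" by simp
    have "m \<in> ?A" unfolding m_def using fin \<open>?A \<noteq> {}\<close> by (rule Max_in)
    then have m: "m < k" "\<theta> m \<le> s" by simp_all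
    have "Suc m \<notin> ?A"
    proof
      assume "Suc m \<in> ?A"
      then have "Suc m \<le> m" unfolding m_def by (rule Max_ge[OF fin])
      then show False by simp
    qed
    then have next_above: "Suc m < k \<longrightarrow> s < \<theta> (Suc m)" by auto
    with m have "?A = {..<Suc m}" by (rule segment)
    with odd have "even m" by simp
    with m next_above show "\<exists>i\<in>{..<k}. even i \<and> \<theta> i \<le> s \<and> (Suc i < k \<longrightarrow> s < \<theta> (Suc i))"
      by auto
  next
    assume "\<exists>i\<in>{..<k}. even i \<and> \<theta> i \<le> s \<and> (Suc i < k \<longrightarrow> s < \<theta> (Suc i))"
    then obtain i where "i < k" "even i" "\<theta> i \<le> s" "Suc i < k \<longrightarrow> s < \<theta> (Suc i)" by auto
    then show "odd (card ?A)" using segment by simp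
  qed
qed

lemma k_threshold_graph_Suc:
  assumes "finite V" and "k_threshold_graph k V E"
  shows "k_threshold_graph (Suc k) V E"
proof -
  obtain \<theta> r where mono: "\<forall>i j. i < j \<and> j < k \<longrightarrow> \<theta> i < \<theta> j"
    and rep: "threshold_rep V E k \<theta> r"
    using assms(2) unfolding k_threshold_graph_def by blast
  \<comment> \<open>The new threshold exceeds every weight sum, so no pair passes it.\<close>
  define top where "top = (\<Sum>i<k. \<bar>\<theta> i\<bar>) + 2 * (\<Sum>v\<in>V. \<bar>r v\<bar>) + 1"
  have sum_nonneg: "0 \<le> (\<Sum>i<k. \<bar>\<theta> i\<bar>)" "0 \<le> (\<Sum>v\<in>V. \<bar>r v\<bar>)"
    by (simp_all add: sum_nonneg)
  have below_top: "\<theta> i < top" if "i < k" for i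
  proof -
    have "\<theta> i \<le> (\<Sum>i<k. \<bar>\<theta> i\<bar>)"
      using member_le_sum[of i "{..<k}" "\<lambda>i. \<bar>\<theta> i\<bar>"] that by simp
    then show ?thesis using sum_nonneg unfolding top_def by linarith
  qed
  have sum_below_top: "r u + r v < top" if "u \<in> V" "v \<in> V" for u v
  proof -
    have "r w \<le> (\<Sum>v\<in>V. \<bar>r v\<bar>)" if "w \<in> V" for w
      using member_le_sum[of w V "\<lambda>v. \<bar>r v\<bar>"] that assms(1) by simp
    from this[OF \<open>u \<in> V\<close>] this[OF \<open>v \<in> V\<close>] show ?thesis
      using sum_nonneg unfolding top_def by linarith
  qed
  define \<theta>' where "\<theta>' = \<theta>(k := top)"
  have "\<forall>i j. i < j \<and> j < Suc k \<longrightarrow> \<theta>' i < \<theta>' j"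
    using mono below_top by (auto simp: \<theta>'_def less_Suc_eq)
  moreover have "threshold_rep V E (Suc k) \<theta>' r"
  proof -
    have "{i. i < Suc k \<and> \<theta>' i \<le> r u + r v} = {i. i < k \<and> \<theta> i \<le> r u + r v}"
      if "u \<in> V" "v \<in> V" for u v
      using sum_below_top[OF that] by (auto simp: \<theta>'_def less_Suc_eq)
    then show ?thesis using rep unfolding threshold_rep_def by simp
  qed
  ultimately show ?thesis unfolding k_threshold_graph_def by blast
qed

lemma k_threshold_graph_mono:
  assumes "finite V" and "j \<le> k" and "k_threshold_graph j V E"
  shows "k_threshold_graph k V E"
  using assms(2,3) by (induction k rule: dec_induct) (auto intro: k_threshold_graph_Suc[OF assms(1)])

lemma threshold_number_eqI:
  assumes "0 < k" and "k_threshold_graph k V E"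
    and "\<And>j. 0 < j \<Longrightarrow> j < k \<Longrightarrow> \<not> k_threshold_graph j V E"
  shows "threshold_number V E = k"
  unfolding threshold_number_def
proof (rule Least_equality)
  show "0 < k \<and> k_threshold_graph k V E" using assms(1,2) ..
  show "k \<le> j" if "0 < j \<and> k_threshold_graph j V E" for j
    using assms(3)[of j] that by (intro leI) blast
qed

lemma k_threshold_graph_of_int:
  fixes \<tau> :: "nat \<Rightarrow> int" and \<rho> :: "'a \<Rightarrow> int"
  assumes "\<And>i j. i < j \<Longrightarrow> j < k \<Longrightarrow> \<tau> i < \<tau> j"
    and "\<And>u v. u \<in> V \<Longrightarrow> v \<in> V \<Longrightarrow> u \<noteq> v \<Longrightarrow>
           E u v \<longleftrightarrow> odd (card {i. i < k \<and> \<tau> i \<le> \<rho> u + \<rho> v})"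
  shows "k_threshold_graph k V E"
  unfolding k_threshold_graph_def threshold_rep_def
proof (intro exI conjI)
  show "\<forall>i j. i < j \<and> j < k \<longrightarrow> real_of_int (\<tau> i) < real_of_int (\<tau> j)"
    using assms(1) by simp
  show "\<forall>u\<in>V. \<forall>v\<in>V. u \<noteq> v \<longrightarrow>
      E u v = odd (card {i. i < k \<and> real_of_int (\<tau> i) \<le> real_of_int (\<rho> u) + real_of_int (\<rho> v)})"
    using assms(2) by (simp flip: of_int_add)
qed

lemma four_threshold_graph_of_int:
  fixes \<rho> :: "'a \<Rightarrow> int"
  assumes "a < b" "b < c" "c < d"
    and "\<And>u v. u \<in> V \<Longrightarrow> v \<in> V \<Longrightarrow> u \<noteq> v \<Longrightarrow>
           E u v \<longleftrightarrow> \<rho> u + \<rho> v \<in> {a..<b} \<union> {c..<d}"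
  shows "k_threshold_graph 4 V E"
proof (rule k_threshold_graph_of_int)
  let ?\<tau> = "nth [a, b, c, d]"
  show mono: "?\<tau> i < ?\<tau> j" if "i < j" "j < 4" for i j
    using that assms(1-3) by (auto simp: less_Suc_eq numeral_eq_Suc)
  show "E u v \<longleftrightarrow> odd (card {i. i < 4 \<and> ?\<tau> i \<le> \<rho> u + \<rho> v})"
    if "u \<in> V" "v \<in> V" "u \<noteq> v" for u v
    using assms(4)[OF that] by (simp add: odd_card_thresholds_iff[OF mono] lessThan_nat_numeral disj_commute)
qed

lemma cycle_edge_iff:
  assumes "u < n" and "v < n"
  shows "cycle_edge n u v \<longleftrightarrow>
           u \<noteq> v \<and> (u + 1 = v \<or> v + 1 = u \<or> (u = 0 \<and> v = n - 1) \<or> (v = 0 \<and> u = n - 1))"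
  using assms by (auto simp: cycle_edge_def mod_Suc)

lemma cycle_edge_sym: "cycle_edge n u v \<longleftrightarrow> cycle_edge n v u"
  unfolding cycle_edge_def by auto

lemma cycle_edge_rotate:
  "cycle_edge n ((w + i) mod n) ((w + j) mod n) \<longleftrightarrow> cycle_edge n (i mod n) (j mod n)"
proof -
  have succ: "(x mod n + 1) mod n = (x + 1) mod n" for x
    by (simp add: mod_Suc_eq)
  show ?thesis
    unfolding cycle_edge_def succ add.assoc cong_add_lcancel_nat[unfolded cong_def] mod_mod_trivial
    by (rule refl)
qed

definition zigzag :: "nat \<Rightarrow> nat \<Rightarrow> int" where
  "zigzag n v = (if even v then int v else 3 * int n - int v)"

lemma zigzag_sum_consecutive_iff:
  assumes "u < n" and "v < n"
  shows "zigzag n u + zigzag n v \<in> {3 * int n - 1..<3 * int n + 2} \<longleftrightarrow> u + 1 = v \<or> v + 1 = u"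
proof -
  consider "even u" "even v" | "even u" "odd v" | "odd u" "even v" | "odd u" "odd v" by blast
  then show ?thesis
  proof cases
    case 1
    then have "u + 1 \<noteq> v" "v + 1 \<noteq> u" by auto
    with 1 assms show ?thesis by (simp add: zigzag_def)
  next
    case 2
    with assms show ?thesis by (simp add: zigzag_def) arith
  next
    case 3
    with assms show ?thesis by (simp add: zigzag_def) arith
  next
    case 4
    then have "u + 1 \<noteq> v" "v + 1 \<noteq> u" by auto
    with 4 assms show ?thesis by (simp add: zigzag_def)
  qed
qed

lemma zigzag_sum_closing_iff:
  assumes "even n" and "u < n" and "v < n"
  shows "zigzag n u + zigzag n v \<in> {2 * int n + 1..<2 * int n + 2} \<longleftrightarrow>
           (u = 0 \<and> v = n - 1) \<or> (v = 0 \<and> u = n - 1)"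
proof -
  have "odd (n - 1)" if "0 < n" using that \<open>even n\<close> by simp
  then show ?thesis
    using assms by (cases "even u"; cases "even v"; simp add: zigzag_def; arith)
qed

lemma zigzag_sum_odd_notin:
  assumes "odd n" and "u < n" and "v < n"
  shows "zigzag n u + zigzag n v \<notin> {int n - 2..<int n - 1}"
proof -
  have "u + v + 2 \<noteq> n" if "even u \<longleftrightarrow> even v"
    using that \<open>odd n\<close> by auto
  then show ?thesis
    using assms by (cases "even u"; cases "even v"; simp add: zigzag_def; arith)
qed

lemma even_cycle_four_threshold:
  assumes "even n" and "4 \<le> n"
  shows "k_threshold_graph 4 {0..<n} (cycle_edge n)"
proof (rule four_threshold_graph_of_int[where \<rho> = "zigzag n"])
  show "2 * int n + 1 < 2 * int n + 2" "2 * int n + 2 < 3 * int n - 1" "3 * int n - 1 < 3 * int n + 2"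
    using assms by simp_all
  fix u v assume "u \<in> {0..<n}" "v \<in> {0..<n}" "u \<noteq> v"
  then have uv: "u < n" "v < n" "u \<noteq> v" by simp_all
  then show "cycle_edge n u v \<longleftrightarrow>
      zigzag n u + zigzag n v \<in> {2 * int n + 1..<2 * int n + 2} \<union> {3 * int n - 1..<3 * int n + 2}"
    unfolding Un_iff cycle_edge_iff[OF uv(1,2)] zigzag_sum_consecutive_iff[OF uv(1,2)]
      zigzag_sum_closing_iff[OF \<open>even n\<close> uv(1,2)] by blast
qed

lemma odd_cycle_four_threshold:
  assumes "odd n" and "3 \<le> n"
  shows "k_threshold_graph 4 {0..<n} (cycle_edge n)"
proof -
  define \<rho> where "\<rho> = (zigzag n)(n - 1 := int n - 2)"
  let ?bands = "{int n - 2..<int n - 1} \<union> {3 * int n - 1..<3 * int n + 2}"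
  have last_vertex: "cycle_edge n (n - 1) v \<longleftrightarrow> \<rho> (n - 1) + \<rho> v \<in> ?bands" if "v < n - 1" for v
  proof (cases "even v")
    case True
    then have "v + 2 \<noteq> n" using \<open>odd n\<close> by auto
    with True that show ?thesis by (simp add: \<rho>_def cycle_edge_iff zigzag_def) arith
  next
    case False
    then have "v + 3 \<noteq> n" "v \<noteq> 0" using \<open>odd n\<close> by (auto simp: odd_pos)
    with False that show ?thesis by (simp add: \<rho>_def cycle_edge_iff zigzag_def) arith
  qed
  have "cycle_edge n u v \<longleftrightarrow> \<rho> u + \<rho> v \<in> ?bands" if uv: "u < n" "v < n" "u \<noteq> v" for u v
  proof -
    consider "u = n - 1" | "v = n - 1" | "u \<noteq> n - 1" "v \<noteq> n - 1" by blast
    then show ?thesis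
    proof cases
      case 1
      with uv last_vertex[of v] show ?thesis by simp
    next
      case 2
      with uv have "u < n - 1" by simp
      with 2 last_vertex[of u] cycle_edge_sym[of n u "n - 1"] show ?thesis by (simp add: add.commute)
    next
      case 3
      then have sum: "\<rho> u + \<rho> v = zigzag n u + zigzag n v" by (simp add: \<rho>_def)
      show ?thesis
        unfolding sum Un_iff cycle_edge_iff[OF uv(1,2)] zigzag_sum_consecutive_iff[OF uv(1,2)]
        using 3 uv(3) zigzag_sum_odd_notin[OF \<open>odd n\<close> uv(1,2)] by blast
    qed
  qed
  then show ?thesis
    using assms by (intro four_threshold_graph_of_int) auto
qed

(* The weights x, p, y, z and p', y' sit on the paths 0-1-2-3 and 0-(n-1)-(n-2), x maximal. *)

lemma three_band_apex_impossible:
  fixes x p y z p' y' :: real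
  assumes B: "B = {a..<b} \<union> {c..}"
    and order: "p' \<le> p" "p \<le> x" "p' \<le> x" "y \<le> x" "y' \<le> x"
    and edges: "x + p \<in> B" "x + p' \<in> B" "p + y \<in> B" "p' + y' \<in> B" "y + z \<in> B"
    and non_edges: "x + y \<notin> B" "x + y' \<notin> B" "x + z \<notin> B" "p + p' \<notin> B" "p + y' \<notin> B" "p' + y \<notin> B"
  shows False
proof -
  have y: "b \<le> x + y" "x + y < c" "a \<le> p + y" "p + y < b"
    using order edges(3) non_edges(1) unfolding B by auto
  have y': "b \<le> x + y'" "x + y' < c" "a \<le> p' + y'" "p' + y' < b"
    using order edges(4) non_edges(2) unfolding B by auto
  have z: "x + z < c" "a \<le> y + z"
    using order edges(5) non_edges(3) unfolding B by auto
  show False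
  proof (cases "c \<le> x + p'")
    case True
    have "p' + y < a"
      using y order non_edges(6) unfolding B by auto
    then show False using True z by linarith
  next
    case False
    then have "x + p' < b" using edges(2) unfolding B by auto
    show False
    proof (cases "c \<le> x + p")
      case True
      then have "p + p' \<in> {a..<b}" using y' order \<open>x + p' < b\<close> by auto
      then show False using non_edges(4) unfolding B by auto
    next
      case False
      then have "x + p < b" using edges(1) unfolding B by auto
      then have "p + y' < a" using order non_edges(5) unfolding B by auto
      then show False using y' order by linarith
    qed
  qed
qed

lemma cycle_not_three_threshold:
  assumes "5 \<le> n"
  shows "\<not> k_threshold_graph 3 {0..<n} (cycle_edge n)"
proof
  assume "k_threshold_graph 3 {0..<n} (cycle_edge n)"
  then obtain \<theta> r where mono: "\<forall>i j. i < j \<and> j < 3 \<longrightarrow> \<theta> i < \<theta> j"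
    and rep: "threshold_rep {0..<n} (cycle_edge n) 3 \<theta> r"
    unfolding k_threshold_graph_def by blast
  define B where "B = {\<theta> 0..<\<theta> 1} \<union> {\<theta> 2..}"
  have "odd (card {i. i < 3 \<and> \<theta> i \<le> s}) \<longleftrightarrow> s \<in> B" for s
    using mono by (subst odd_card_thresholds_iff) (auto simp: B_def lessThan_nat_numeral)
  then have edge_iff: "cycle_edge n u v \<longleftrightarrow> r u + r v \<in> B" if "u < n" "v < n" "u \<noteq> v" for u v
    using rep that unfolding threshold_rep_def by simp
  have "Max (r ` {0..<n}) \<in> r ` {0..<n}"
    using assms by (intro Max_in) auto
  then obtain w where w: "w < n" "r w = Max (r ` {0..<n})" by auto
  have w_max: "r v \<le> r w" if "v < n" for v
    using that w by (simp add: Max_ge)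
  define q where "q i = r ((w + i) mod n)" for i
  have q_max: "q i \<le> q 0" for i
    unfolding q_def using w w_max assms by simp
  have q_edge_iff: "q i + q j \<in> B \<longleftrightarrow> cycle_edge n i j" if "i < n" "j < n" "i \<noteq> j" for i j
  proof -
    have "(w + i) mod n \<noteq> (w + j) mod n"
      using that cong_add_lcancel_nat[of w i j n] unfolding cong_def by simp
    then show ?thesis
      using edge_iff[of "(w + i) mod n" "(w + j) mod n"] cycle_edge_rotate[of n w i j] that assms
      by (simp add: q_def)
  qed
  have edges: "q 0 + q 1 \<in> B" "q 0 + q (n - 1) \<in> B" "q 1 + q 2 \<in> B" "q (n - 1) + q (n - 2) \<in> B"
    "q 2 + q 3 \<in> B" "q (n - 2) + q (n - 3) \<in> B"
    using assms by (simp_all add: q_edge_iff cycle_edge_iff) arith+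
  have non_edges: "q 0 + q 2 \<notin> B" "q 0 + q (n - 2) \<notin> B" "q 0 + q 3 \<notin> B" "q 0 + q (n - 3) \<notin> B"
    "q 1 + q (n - 1) \<notin> B" "q 1 + q (n - 2) \<notin> B" "q (n - 1) + q 2 \<notin> B"
    using assms by (simp_all add: q_edge_iff cycle_edge_iff) arith+
  show False
  proof (cases "q (n - 1) \<le> q 1")
    case True
    show False
      by (rule three_band_apex_impossible[OF B_def True q_max q_max q_max q_max edges(1-5) non_edges(1-3,5-7)])
  next
    case False
    show False
      by (rule three_band_apex_impossible[OF B_def,
            where x = "q 0" and p = "q (n - 1)" and y = "q (n - 2)" and z = "q (n - 3)"
              and p' = "q 1" and y' = "q 2"])
        (use False edges non_edges q_max in \<open>simp_all add: ac_simps\<close>)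
  qed
qed

lemma triangle_one_threshold: "k_threshold_graph 1 {0..<3} (cycle_edge 3)"
  by (rule k_threshold_graph_of_int[where \<tau> = "\<lambda>_. 0" and \<rho> = "\<lambda>_. 0"]) (auto simp: cycle_edge_iff)

lemma square_two_threshold: "k_threshold_graph 2 {0..<4} (cycle_edge 4)"
proof (rule k_threshold_graph_of_int[where \<tau> = "nth [1, 2]" and \<rho> = "\<lambda>v. if even v then 0 else 1"])
  show mono: "[1, 2] ! i < ([1, 2] ! j :: int)" if "i < j" "j < 2" for i j
    using that by (auto simp: less_Suc_eq numeral_eq_Suc)
  fix u v :: nat assume "u \<in> {0..<4}" "v \<in> {0..<4}" "u \<noteq> v"
  then have "cycle_edge 4 u v \<longleftrightarrow> (even u \<longleftrightarrow> odd v)"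
    by (auto simp: cycle_edge_iff) presburger+
  then show "cycle_edge 4 u v \<longleftrightarrow>
      odd (card {i. i < 2 \<and> [1, 2] ! i \<le> (if even u then 0 else 1) + (if even v then 0 else 1 :: int)})"
    by (simp add: odd_card_thresholds_iff[OF mono] lessThan_nat_numeral)
qed

lemma square_not_one_threshold: "\<not> k_threshold_graph 1 {0..<4} (cycle_edge 4)"
proof
  assume "k_threshold_graph 1 {0..<4} (cycle_edge 4)"
  then obtain \<theta> r where rep: "threshold_rep {0..<4} (cycle_edge 4) 1 \<theta> r"
    unfolding k_threshold_graph_def by blast
  have "odd (card {i. i < 1 \<and> \<theta> i \<le> s}) \<longleftrightarrow> \<theta> 0 \<le> s" for s
    by (subst odd_card_thresholds_iff) auto
  then have edge_iff: "cycle_edge 4 u v \<longleftrightarrow> \<theta> 0 \<le> r u + r v" if "u < 4" "v < 4" "u \<noteq> v" for u v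
    using rep that unfolding threshold_rep_def by simp
  have "\<theta> 0 \<le> r 0 + r 1" "\<theta> 0 \<le> r 2 + r 3" "\<not> \<theta> 0 \<le> r 0 + r 2" "\<not> \<theta> 0 \<le> r 1 + r 3"
    using edge_iff[of 0 1] edge_iff[of 2 3] edge_iff[of 0 2] edge_iff[of 1 3]
    by (simp_all add: cycle_edge_def)
  then show False by linarith
qed

theorem theorem1:
  fixes n :: nat
  assumes "n \<ge> 3"
  shows "threshold_number {0..<n} (cycle_edge n) =
           (if n = 3 then 1 else if n = 4 then 2 else 4)"
proof -
  consider "n = 3" | "n = 4" | "5 \<le> n" using assms by linarith
  then show ?thesis
  proof cases
    case 1
    then show ?thesis using triangle_one_threshold by (auto intro: threshold_number_eqI)
  next
    case 2
    have "\<not> k_threshold_graph j {0..<4} (cycle_edge 4)" if "0 < j" "j < 2" for j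
      using that square_not_one_threshold by (simp add: less_2_cases_iff)
    with 2 show ?thesis
      using square_two_threshold by (auto intro: threshold_number_eqI)
  next
    case 3
    have "k_threshold_graph 4 {0..<n} (cycle_edge n)"
      using 3 even_cycle_four_threshold odd_cycle_four_threshold by (cases "even n") auto
    moreover have "\<not> k_threshold_graph j {0..<n} (cycle_edge n)" if "j < 4" for j
      using k_threshold_graph_mono[of "{0..<n}" j 3] cycle_not_three_threshold[OF 3] that by auto
    ultimately show ?thesis using 3 by (auto intro: threshold_number_eqI)
  qed
qed

end
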